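(* Let $I$ be an open interval and $U$ a subgroup of $\mathrm{Homeo}^+(I)$ such that $U$ acts transitively on $I$, the commutator subgroup $[U,U]$ acts freely on $I$, and each non-identity member of $U$ has only finitely many fixed points. Then each non-identity member of $U$ has at most one fixed point.
   Context: $\mathrm{Homeo}^+(I)$ is the group of increasing homeomorphisms of $I$. $U$ acts transitively if for all $x,y\in I$ some $\varphi\in U$ has $\varphi(x)=y$. $[U,U]$ acts freely if no non-identity element of $[U,U]$ has a fixed point in $I$. *)

theory Defs
  imports "HOL-Analysis.Analysis"
begin

text \<open>Elements of Homeo+(I) are represented as functions real => real that are
  the identity outside I (so that composition and inverses are the group operations).\<close>

definition homeo_plus :: "real set \<Rightarrow> (real \<Rightarrow> real) set" where
  "homeo_plus I = {f. (\<exists>g. homeomorphism I I f g) \<and> strict_mono_on I f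
                        \<and> (\<forall>x. x \<notin> I \<longrightarrow> f x = x)}"

definition hinv :: "real set \<Rightarrow> (real \<Rightarrow> real) \<Rightarrow> real \<Rightarrow> real" where
  "hinv I f = (\<lambda>x. if x \<in> I then inv_into I f x else x)"

definition is_subgroup_homeo :: "real set \<Rightarrow> (real \<Rightarrow> real) set \<Rightarrow> bool" where
  "is_subgroup_homeo I U \<longleftrightarrow> U \<subseteq> homeo_plus I \<and> id \<in> U
     \<and> (\<forall>f\<in>U. \<forall>g\<in>U. f \<circ> g \<in> U) \<and> (\<forall>f\<in>U. hinv I f \<in> U)"

definition commutator :: "real set \<Rightarrow> (real \<Rightarrow> real) \<Rightarrow> (real \<Rightarrow> real) \<Rightarrow> real \<Rightarrow> real" where
  "commutator I f g = f \<circ> g \<circ> hinv I f \<circ> hinv I g"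

inductive_set commutator_subgroup :: "real set \<Rightarrow> (real \<Rightarrow> real) set \<Rightarrow> (real \<Rightarrow> real) set"
  for I U where
  cs_id: "id \<in> commutator_subgroup I U"
| cs_comm: "f \<in> U \<Longrightarrow> g \<in> U \<Longrightarrow> commutator I f g \<in> commutator_subgroup I U"
| cs_mult: "f \<in> commutator_subgroup I U \<Longrightarrow> g \<in> commutator_subgroup I U \<Longrightarrow> f \<circ> g \<in> commutator_subgroup I U"
| cs_inv: "f \<in> commutator_subgroup I U \<Longrightarrow> hinv I f \<in> commutator_subgroup I U"

definition acts_transitively :: "real set \<Rightarrow> (real \<Rightarrow> real) set \<Rightarrow> bool" where
  "acts_transitively I U \<longleftrightarrow> (\<forall>x\<in>I. \<forall>y\<in>I. \<exists>\<phi>\<in>U. \<phi> x = y)"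

definition acts_freely :: "real set \<Rightarrow> (real \<Rightarrow> real) set \<Rightarrow> bool" where
  "acts_freely I G \<longleftrightarrow> (\<forall>f\<in>G. f \<noteq> id \<longrightarrow> (\<forall>x\<in>I. f x \<noteq> x))"

definition fixed_points :: "real set \<Rightarrow> (real \<Rightarrow> real) \<Rightarrow> real set" where
  "fixed_points I f = {x\<in>I. f x = x}"

end

theory Submission
  imports Defs
begin

text \<open>Suppose some \<open>f \<noteq> id\<close> in \<open>U\<close> has two fixed points; let \<open>b\<close> be its largest one and
  \<open>a < b\<close> another. By transitivity some \<open>g \<in> U\<close> sends \<open>a\<close> to \<open>b\<close>. The commutator
  \<open>f g f\<^sup>-\<^sup>1 g\<^sup>-\<^sup>1\<close> then fixes \<open>b\<close>, so by freeness it is the identity: \<open>f\<close> and \<open>g\<close> commute.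
  Hence \<open>g\<close> permutes the fixed points of \<open>f\<close>, yet \<open>g b > g a = b\<close> is a fixed point beyond
  the largest one.\<close>

lemma exists_less_Max:
  fixes F :: "'a::linorder set"
  assumes "finite F" "card F \<ge> 2"
  shows "\<exists>a\<in>F. a < Max F"
proof -
  have "F \<noteq> {}"
    using assms(2) by auto
  then have "card (F - {Max F}) \<ge> 1"
    using assms by (simp add: card_Diff_singleton)
  then obtain a where "a \<in> F" "a \<noteq> Max F"
    by (metis DiffE card.empty ex_in_conv insertI1 not_one_le_zero)
  then show ?thesis
    using Max_ge[OF assms(1)] by (meson order_neq_le_trans)
qed

lemma homeo_plus_maps_into:
  assumes "f \<in> homeo_plus I" "x \<in> I"
  shows "f x \<in> I"
  using assms unfolding homeo_plus_def homeomorphism_def by blast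

lemma hinv_apply:
  assumes "f \<in> homeo_plus I" "x \<in> I"
  shows "hinv I f (f x) = x"
proof -
  have "inj_on f I"
    using assms(1) strict_mono_on_imp_inj_on unfolding homeo_plus_def by blast
  then show ?thesis
    using assms homeo_plus_maps_into unfolding hinv_def by simp
qed

lemma commutator_apply:
  assumes "f \<in> homeo_plus I" "g \<in> homeo_plus I" "x \<in> I"
  shows "commutator I f g (g (f x)) = f (g x)"
  using assms by (simp add: commutator_def hinv_apply homeo_plus_maps_into)

lemma commute_if_commutator_fixes:
  assumes sg: "is_subgroup_homeo I U"
    and free: "acts_freely I (commutator_subgroup I U)"
    and "f \<in> U" "g \<in> U" "a \<in> I" "f a = a" "f (g a) = g a"
    and "x \<in> I"
  shows "g (f x) = f (g x)"
proof -
  have fg: "f \<in> homeo_plus I" "g \<in> homeo_plus I"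
    using sg \<open>f \<in> U\<close> \<open>g \<in> U\<close> unfolding is_subgroup_homeo_def by blast+
  have "commutator I f g (g a) = g a"
    using commutator_apply[OF fg \<open>a \<in> I\<close>] \<open>f a = a\<close> \<open>f (g a) = g a\<close> by simp
  moreover have "commutator I f g \<in> commutator_subgroup I U"
    using \<open>f \<in> U\<close> \<open>g \<in> U\<close> by (rule cs_comm)
  ultimately have "commutator I f g = id"
    using free homeo_plus_maps_into[OF fg(2) \<open>a \<in> I\<close>] unfolding acts_freely_def by blast
  then show ?thesis
    using commutator_apply[OF fg \<open>x \<in> I\<close>] by simp
qed

theorem lemma4p1:
  fixes I :: "real set" and U :: "(real \<Rightarrow> real) set"
  assumes "open I" and "is_interval I" and "I \<noteq> {}"
    and "is_subgroup_homeo I U"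
    and "acts_transitively I U"
    and "acts_freely I (commutator_subgroup I U)"
    and "\<forall>f\<in>U. f \<noteq> id \<longrightarrow> finite (fixed_points I f)"
  shows "\<forall>f\<in>U. f \<noteq> id \<longrightarrow> card (fixed_points I f) \<le> 1"
proof (intro ballI impI, rule ccontr)
  fix f assume "f \<in> U" "f \<noteq> id" and "\<not> card (fixed_points I f) \<le> 1"
  define F where "F = fixed_points I f"
  define b where "b = Max F"
  have "finite F" "card F \<ge> 2"
    using assms(7) \<open>f \<in> U\<close> \<open>f \<noteq> id\<close> \<open>\<not> card (fixed_points I f) \<le> 1\<close> F_def by auto
  then obtain a where "a \<in> F" "a < b"
    using exists_less_Max unfolding b_def by blast
  have "b \<in> F"
    using \<open>finite F\<close> \<open>a \<in> F\<close> Max_in b_def by blast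
  have aI: "a \<in> I" "f a = a" and bI: "b \<in> I" "f b = b"
    using \<open>a \<in> F\<close> \<open>b \<in> F\<close> unfolding F_def fixed_points_def by auto
  obtain g where "g \<in> U" "g a = b"
    using assms(5) aI(1) bI(1) unfolding acts_transitively_def by blast
  have g: "g \<in> homeo_plus I"
    using assms(4) \<open>g \<in> U\<close> unfolding is_subgroup_homeo_def by blast
  have "f (g b) = g b"
    using commute_if_commutator_fixes[OF assms(4,6) \<open>f \<in> U\<close> \<open>g \<in> U\<close> aI] bI \<open>g a = b\<close> by metis
  then have "g b \<le> b"
    using homeo_plus_maps_into[OF g bI(1)] \<open>finite F\<close> unfolding b_def F_def fixed_points_def by simp
  moreover have "b < g b"
    using g \<open>a < b\<close> aI(1) bI(1) \<open>g a = b\<close> unfolding homeo_plus_def strict_mono_on_def by blast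
  ultimately show False by simp
qed

end
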